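(* (a) Suppose a state $\Phi$ satisfies $D_{\min,\mathbb{F}}(\Phi)=D_{s,\mathbb{F}}(\Phi)=:r$, let $\sigma^\star\in\mathbb{F}$ be a free state with $2^{-r}\Phi+(1-2^{-r})\sigma^\star\in\mathbb{F}$, and for $\kappa\in[0,1]$ put $\Phi_\kappa=\kappa\Phi+(1-\kappa)\sigma^\star$. Then $D_{\min,\mathbb{F}}(\Phi_\kappa)=0$ for $0\le\kappa<1$ and $=r$ for $\kappa=1$, and $D_{\max,\mathbb{F}}(\Phi_\kappa)=D_{s,\mathbb{F}}(\Phi_\kappa)=\max\{r-\log\frac1\kappa,0\}$ for every $\kappa\in[0,1]$. (b) Suppose instead $D_{\min,\mathrm{aff}(\mathbb{F})}(\Phi)=D_{\max,\mathbb{F}}(\Phi)=:r$, let $\sigma^\star$ be a state with $2^{-r}\Phi+(1-2^{-r})\sigma^\star\in\mathbb{F}$, and $\Phi_\kappa=\kappa\Phi+(1-\kappa)\sigma^\star$. Then $D_{\min,\mathrm{aff}(\mathbb{F})}(\Phi_\kappa)=D_{\min,\mathbb{F}}(\Phi_\kappa)$ equals $0$ for $0<\kappa<1$, $\log\frac{1}{1-2^{-r}}$ for $\kappa=0$, and $r$ for $\kappa=1$; and $D_{\max,\mathbb{F}}(\Phi_\kappa)=\max\{r-\log\frac1\kappa,\ \log\frac{1-\kappa}{1-2^{-r}}\}$ for every $\kappa\in[0,1]$.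
   Context: Finite-dimensional Hilbert space, $\log$ base 2 (with $\log\frac10=+\infty$ conventions as needed). $\mathbb{F}$ is a convex and closed set of (free) states. $D_{\min}(\rho\|\sigma)=-\log\mathrm{Tr}[\Pi_\rho\sigma]$ ($\Pi_\rho$ support projector); $D_H^0(\rho\|\sigma)=\sup\{-\log\mathrm{Tr}[P\sigma]:0\le P\le\mathbb{1},\mathrm{Tr}[P\rho]=1\}$ (also for Hermitian $\sigma$). $D_{\min,\mathbb{F}}(\rho)=\inf_{\sigma\in\mathbb{F}}D_{\min}(\rho\|\sigma)$; $D_{\min,\mathrm{aff}(\mathbb{F})}(\rho)=\inf_{\sigma\in\mathrm{aff}(\mathbb{F})}D^0_H(\rho\|\sigma)$ with $\mathrm{aff}(\mathbb{F})$ the affine hull; $D_{\max,\mathbb{F}}(\rho)=\inf\{\log(1+s):\frac{\rho+s\tau}{1+s}\in\mathbb{F},\tau\text{ a state}\}$; $D_{s,\mathbb{F}}(\rho)=\inf\{\log(1+s):\frac{\rho+s\tau}{1+s}\in\mathbb{F},\tau\in\mathbb{F}\}$. (The state $\sigma^\star$ in each case is a state attaining the corresponding robustness decomposition of $\Phi$; such a state exists by closedness of $\mathbb{F}$.) *)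

theory Defs
  imports "HOL-Analysis.Analysis"
begin

type_synonym 'n op = "complex^'n^'n"

definition hermitian :: "'n::finite op \<Rightarrow> bool" where
  "hermitian A \<longleftrightarrow> (\<forall>i j. A $ i $ j = cnj (A $ j $ i))"

definition psd :: "'n::finite op \<Rightarrow> bool" where
  "psd A \<longleftrightarrow> hermitian A \<and>
     (\<forall>x::complex^'n. 0 \<le> Re (\<Sum>i\<in>UNIV. \<Sum>j\<in>UNIV. cnj (x $ i) * A $ i $ j * x $ j))"

definition density :: "'n::finite op \<Rightarrow> bool" where
  "density \<rho> \<longleftrightarrow> psd \<rho> \<and> trace \<rho> = 1"

definition supp_proj :: "'n::finite op \<Rightarrow> 'n op" where
  "supp_proj \<rho> = (THE P. hermitian P \<and> P ** P = P \<and>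
       range (\<lambda>x. P *v x) = range (\<lambda>x. \<rho> *v x))"

text \<open>Base-2 logarithm extended to ereal, with log x = -\<infinity> for x \<le> 0
  (so that -log 0 = +\<infinity>).\<close>
definition elog2 :: "real \<Rightarrow> ereal" where
  "elog2 x = (if x \<le> 0 then -\<infinity> else ereal (log 2 x))"

definition Dmin :: "'n::finite op \<Rightarrow> 'n op \<Rightarrow> ereal" where
  "Dmin \<rho> \<sigma> = - elog2 (Re (trace (supp_proj \<rho> ** \<sigma>)))"

definition DH0 :: "'n::finite op \<Rightarrow> 'n op \<Rightarrow> ereal" where
  "DH0 \<rho> \<sigma> = (SUP P \<in> {P. psd P \<and> psd (mat 1 - P) \<and> trace (P ** \<rho>) = 1}.
                   - elog2 (Re (trace (P ** \<sigma>))))"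

definition Dmin_F :: "'n::finite op set \<Rightarrow> 'n op \<Rightarrow> ereal" where
  "Dmin_F F \<rho> = (INF \<sigma> \<in> F. Dmin \<rho> \<sigma>)"

definition Dmin_aff :: "'n::finite op set \<Rightarrow> 'n op \<Rightarrow> ereal" where
  "Dmin_aff F \<rho> = (INF \<sigma> \<in> affine hull F. DH0 \<rho> \<sigma>)"

definition Dmax_F :: "'n::finite op set \<Rightarrow> 'n op \<Rightarrow> ereal" where
  "Dmax_F F \<rho> = (INF s \<in> {s::real. 0 \<le> s \<and>
      (\<exists>\<tau>. density \<tau> \<and> (1 / (1 + s)) *\<^sub>R (\<rho> + s *\<^sub>R \<tau>) \<in> F)}. ereal (log 2 (1 + s)))"

definition Ds_F :: "'n::finite op set \<Rightarrow> 'n op \<Rightarrow> ereal" where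
  "Ds_F F \<rho> = (INF s \<in> {s::real. 0 \<le> s \<and>
      (\<exists>\<tau>\<in>F. (1 / (1 + s)) *\<^sub>R (\<rho> + s *\<^sub>R \<tau>) \<in> F)}. ereal (log 2 (1 + s)))"

end

theory Submission
  imports Defs
begin

text \<open>
  Put q = 2 powr -r and \<omega> = q \<Phi> + (1 - q) \<sigma>, a free state. For every \<kappa>, the state
  \<Phi>\<kappa> = \<kappa> \<Phi> + (1 - \<kappa>) \<sigma> can be mixed with \<sigma> (if \<kappa> \<ge> q) or with \<Phi> (if \<kappa> \<le> q) to give \<omega>,
  which bounds its robustness from above; the lower bounds come from D_min,F \<le> D_max,F
  and from D_max,F(\<kappa> A + (1 - \<kappa>) B) \<ge> D_max,F(A) + log \<kappa>. For 0 < \<kappa> < 1 the support of \<Phi>\<kappa>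
  contains that of a free state, so its min-relative entropies vanish.

  The one non-elementary step is D_min,aff(\<sigma>) \<ge> -log(1 - q) in part (b). The trace
  profiles (tr P \<omega>, tr P (\<omega> - \<sigma>')) of the zero-error tests P for \<Phi> form a compact convex
  set; if it missed (q, 0), a separating line would produce an affine combination \<theta> of \<omega>
  and \<sigma>' \<in> aff F with D_H^0(\<Phi> || \<theta>) < r. The test attaining (q, 0) rejects \<sigma> surely, and
  its complement accepts \<sigma>' with probability 1 - q.

  Positivity of tr (A B) for positive semidefinite A, B and the existence of support
  projections are proved by induction along Schur complements (Cholesky elimination).
\<close>

section \<open>Adjoints, inner products and outer products\<close>

definition mat_adjoint :: "complex^'n^'m \<Rightarrow> complex^'m^'n" where
  "mat_adjoint A = (\<chi> i j. cnj (A $ j $ i))"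

definition cinner :: "complex^'n::finite \<Rightarrow> complex^'n \<Rightarrow> complex" where
  "cinner x y = (\<Sum>i\<in>UNIV. cnj (x $ i) * y $ i)"

definition outer_prod :: "complex^'m \<Rightarrow> complex^'n \<Rightarrow> complex^'n^'m" where
  "outer_prod v w = (\<chi> i j. v $ i * cnj (w $ j))"

lemma mat_adjoint_nth [simp]: "mat_adjoint A $ i $ j = cnj (A $ j $ i)"
  by (simp add: mat_adjoint_def)

lemma outer_prod_nth [simp]: "outer_prod v w $ i $ j = v $ i * cnj (w $ j)"
  by (simp add: outer_prod_def)

lemma hermitian_iff_adjoint: "hermitian A \<longleftrightarrow> mat_adjoint A = A"
  unfolding hermitian_def vec_eq_iff mat_adjoint_nth by (metis complex_cnj_cnj)

lemma mat_adjoint_add: "mat_adjoint (A + B) = mat_adjoint A + mat_adjoint B"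
  by (simp add: vec_eq_iff)

lemma mat_adjoint_diff: "mat_adjoint (A - B) = mat_adjoint A - mat_adjoint B"
  by (simp add: vec_eq_iff)

lemma mat_adjoint_scaleR: "mat_adjoint (c *\<^sub>R A) = c *\<^sub>R mat_adjoint A"
  by (simp add: vec_eq_iff complex_cnj_scaleR)

lemma mat_adjoint_mat_1 [simp]: "mat_adjoint (mat 1) = mat 1"
  by (simp add: vec_eq_iff mat_def)

lemma mat_adjoint_mult: "mat_adjoint (A ** B) = mat_adjoint B ** mat_adjoint A"
  by (simp add: vec_eq_iff matrix_matrix_mult_def mult.commute)

lemma mat_adjoint_outer_prod: "mat_adjoint (outer_prod v w) = outer_prod w v"
  by (simp add: vec_eq_iff mult.commute)

lemma trace_mat_adjoint: "trace (mat_adjoint A) = cnj (trace A)"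
  by (simp add: trace_def)

lemma cinner_mat_adjoint: "cinner x (A *v y) = cinner (mat_adjoint A *v x) y"
proof -
  have "cinner x (A *v y) = (\<Sum>i\<in>UNIV. \<Sum>j\<in>UNIV. cnj (x $ i) * A $ i $ j * y $ j)"
    by (simp add: cinner_def matrix_vector_mult_def sum_distrib_left mult_ac)
  also have "\<dots> = (\<Sum>j\<in>UNIV. \<Sum>i\<in>UNIV. cnj (x $ i) * A $ i $ j * y $ j)"
    by (rule sum.swap)
  also have "\<dots> = cinner (mat_adjoint A *v x) y"
    by (simp add: cinner_def matrix_vector_mult_def sum_distrib_left sum_distrib_right mult_ac)
  finally show ?thesis .
qed

lemma cnj_cinner: "cnj (cinner x y) = cinner y x"
  by (simp add: cinner_def mult.commute)

lemma cinner_add_left: "cinner (x + y) z = cinner x z + cinner y z"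
  by (simp add: cinner_def sum.distrib algebra_simps)

lemma cinner_add_right: "cinner z (x + y) = cinner z x + cinner z y"
  by (simp add: cinner_def sum.distrib algebra_simps)

lemma cinner_diff_right: "cinner z (x - y) = cinner z x - cinner z y"
  by (simp add: cinner_def sum_subtractf algebra_simps)

lemma cinner_zero_left [simp]: "cinner 0 x = 0"
  by (simp add: cinner_def)

lemma cinner_smult_left: "cinner (c *s x) z = cnj c * cinner x z"
  by (simp add: cinner_def sum_distrib_left mult_ac)

lemma cinner_smult_right: "cinner z (c *s x) = c * cinner z x"
  by (simp add: cinner_def sum_distrib_left mult_ac)

lemma Re_cinner_self: "Re (cinner x x) = (\<Sum>i\<in>UNIV. (cmod (x $ i))\<^sup>2)"
  by (simp add: cinner_def Re_sum cmod_power2) (simp add: power2_eq_square)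

lemma cinner_self_real: "cinner x x = of_real (Re (cinner x x))"
  by (simp add: complex_eq_iff cinner_def Im_sum)

lemma cinner_self_nonneg: "0 \<le> Re (cinner x x)"
  by (simp add: Re_cinner_self sum_nonneg)

lemma cinner_self_eq_0_iff: "Re (cinner x x) = 0 \<longleftrightarrow> x = 0"
  by (simp add: Re_cinner_self sum_nonneg_eq_0_iff vec_eq_iff)

lemma cinner_axis: "cinner (axis i 1) x = x $ i"
proof -
  have "cnj (axis i 1 $ j) * x $ j = (if j = i then x $ j else 0)" for j
    by (simp add: axis_def)
  then show ?thesis unfolding cinner_def by simp
qed

lemma mulv_axis_nth: "(A *v axis j 1) $ i = A $ i $ j"
  by (simp add: matrix_vector_mult_def axis_def if_distrib cong: if_cong)

lemma matrix_mulv_smult: "(A::complex^'n::finite^'m) *v (c *s x) = c *s (A *v x)"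
  by (simp add: vec_eq_iff matrix_vector_mult_def sum_distrib_left mult_ac)

lemma scaleR_eq_smult: "(r::real) *\<^sub>R (x::complex^'n) = of_real r *s x"
  by (auto simp: vec_eq_iff complex_eq_iff)

lemma scaleR_mulv: "((c::real) *\<^sub>R (A::complex^'n::finite^'m)) *v x = c *\<^sub>R (A *v x)"
  by (simp add: vec_eq_iff matrix_vector_mult_def scaleR_sum_right)

lemma matrix_mult_diff_left: "(A - B) ** C = A ** C - B ** (C::complex^'p^'n::finite)"
  by (simp add: vec_eq_iff matrix_matrix_mult_def sum_subtractf algebra_simps)

lemma matrix_mult_diff_right: "C ** (A - B) = C ** A - (C::complex^'n::finite^'m) ** B"
  by (simp add: vec_eq_iff matrix_matrix_mult_def sum_subtractf algebra_simps)

lemma matrix_mult_add_left: "(A + B) ** C = A ** C + B ** (C::complex^'p^'n::finite)"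
  by (simp add: vec_eq_iff matrix_matrix_mult_def sum.distrib algebra_simps)

lemma trace_zero [simp]: "trace 0 = 0"
  by (simp add: trace_def)

lemma matrix_mult_scaleR_left: "((c::real) *\<^sub>R A) ** (B::complex^'p^'n::finite) = c *\<^sub>R (A ** B)"
  by (simp add: scalar_matrix_assoc)

lemma matrix_mult_scaleR_right: "(A::complex^'n::finite^'m) ** ((c::real) *\<^sub>R B) = c *\<^sub>R (A ** B)"
  by (simp add: vec_eq_iff matrix_matrix_mult_def scaleR_sum_right)

lemma trace_scaleR: "trace ((c::real) *\<^sub>R (A::'n::finite op)) = of_real c * trace A"
proof -
  have "trace (c *\<^sub>R A) = c *\<^sub>R trace A" by (simp add: trace_def scaleR_sum_right)
  then show ?thesis by (simp add: scaleR_conv_of_real)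
qed

lemma outer_prod_mulv: "outer_prod v w *v x = cinner w x *s v"
  by (simp add: vec_eq_iff matrix_vector_mult_def cinner_def sum_distrib_left mult_ac)

lemma matrix_mult_outer_prod: "A ** outer_prod v w = outer_prod (A *v v) w"
  by (simp add: vec_eq_iff matrix_vector_mult_def matrix_matrix_mult_def sum_distrib_right
      sum_distrib_left mult_ac)

lemma outer_prod_matrix_mult: "outer_prod v w ** A = outer_prod v (mat_adjoint A *v w)"
  by (simp add: vec_eq_iff matrix_vector_mult_def matrix_matrix_mult_def sum_distrib_left mult_ac)

lemma outer_prod_scaleR: "outer_prod (of_real r *s u) w = r *\<^sub>R outer_prod u w"
  by (auto simp: vec_eq_iff complex_eq_iff algebra_simps)

lemma trace_mult_outer_prod: "trace (A ** outer_prod v v) = cinner v (A *v v)"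
  by (simp add: trace_def matrix_matrix_mult_def cinner_def matrix_vector_mult_def
      sum_distrib_left mult_ac)

lemma hermitian_cinner_swap: "hermitian A \<Longrightarrow> cinner x (A *v y) = cnj (cinner y (A *v x))"
  by (metis cinner_mat_adjoint cnj_cinner hermitian_iff_adjoint)

lemma hermitian_form_real: "hermitian A \<Longrightarrow> cinner x (A *v x) = of_real (Re (cinner x (A *v x)))"
  using hermitian_cinner_swap[of A x x] by (simp add: complex_eq_iff)

lemma hermitian_diag_real: "hermitian A \<Longrightarrow> A $ i $ i = of_real (Re (A $ i $ i))"
  using hermitian_form_real[of A "axis i 1"] by (simp add: cinner_axis mulv_axis_nth)

lemma trace_hermitian_mult_real: "hermitian A \<Longrightarrow> hermitian B \<Longrightarrow> Im (trace (A ** B)) = 0"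
  using trace_mat_adjoint[of "A ** B"] trace_mul_sym[of A B]
  by (simp add: mat_adjoint_mult hermitian_iff_adjoint complex_eq_iff)

lemma quadratic_form_add_smult:
  "cinner (x + l *s y) ((B::'n::finite op) *v (x + l *s y)) =
     cinner x (B *v x) + l * cinner x (B *v y) + cnj l * cinner y (B *v x)
     + cnj l * l * cinner y (B *v y)"
  by (simp add: matrix_vector_right_distrib matrix_mulv_smult cinner_add_left cinner_add_right
      cinner_smult_left cinner_smult_right algebra_simps)

section \<open>Positive semidefinite matrices\<close>

lemma psd_iff_form: "psd A \<longleftrightarrow> hermitian A \<and> (\<forall>x. 0 \<le> Re (cinner x (A *v x)))"
proof -
  have "(\<Sum>i\<in>UNIV. \<Sum>j\<in>UNIV. cnj (x $ i) * A $ i $ j * x $ j) = cinner x (A *v x)" for x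
    by (simp add: cinner_def matrix_vector_mult_def sum_distrib_left mult_ac)
  then show ?thesis unfolding psd_def by simp
qed

lemma psd_hermitian: "psd A \<Longrightarrow> hermitian A"
  by (simp add: psd_def)

lemma psd_form_nonneg: "psd A \<Longrightarrow> 0 \<le> Re (cinner x (A *v x))"
  by (simp add: psd_iff_form)

lemma psd_add: "psd A \<Longrightarrow> psd B \<Longrightarrow> psd (A + B)"
  by (simp add: psd_iff_form hermitian_iff_adjoint mat_adjoint_add
      matrix_vector_mult_add_rdistrib cinner_add_right)

lemma psd_scaleR: "psd A \<Longrightarrow> 0 \<le> c \<Longrightarrow> psd (c *\<^sub>R A)"
  by (simp add: psd_iff_form hermitian_iff_adjoint mat_adjoint_scaleR scaleR_mulv scaleR_eq_smult
      cinner_smult_right)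

lemma psd_0: "psd 0"
  by (simp add: psd_iff_form hermitian_def cinner_def)

lemma psd_mat_1: "psd (mat 1)"
  by (simp add: psd_iff_form hermitian_iff_adjoint cinner_self_nonneg)

lemma psd_sandwich: "psd P \<Longrightarrow> hermitian C \<Longrightarrow> psd (C ** P ** C)"
proof -
  assume P: "psd P" and C: "hermitian C"
  have "cinner x ((C ** P ** C) *v x) = cinner (C *v x) (P *v (C *v x))" for x
    by (metis C cinner_mat_adjoint hermitian_iff_adjoint matrix_vector_mul_assoc)
  then show ?thesis using P C psd_form_nonneg[OF P]
    by (simp add: psd_iff_form hermitian_iff_adjoint mat_adjoint_mult matrix_mul_assoc)
qed

lemma psd_form_eq_0_imp_mulv_eq_0:
  assumes psd: "psd B" and zero: "Re (cinner x (B *v x)) = 0"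
  shows "B *v x = 0"
proof -
  have herm: "hermitian B" using psd by (rule psd_hermitian)
  define y where "y = B *v x"
  define N where "N = Re (cinner y y)"
  define d where "d = Re (cinner y (B *v y))"
  define t where "t = 1 / (d + 1)"
  have "0 \<le> d" using psd_form_nonneg[OF psd] by (simp add: d_def)
  then have t: "0 < t" "t * d < 1" by (simp_all add: t_def field_simps)
  have yx: "cinner y (B *v x) = of_real N" unfolding y_def N_def by (rule cinner_self_real)
  have xy: "cinner x (B *v y) = of_real N" using hermitian_cinner_swap[OF herm, of x y] yx by simp
  have yy: "cinner y (B *v y) = of_real d" using hermitian_form_real[OF herm, of y] by (simp add: d_def)
  \<comment> \<open>Perturbing x in the direction B x by a small multiple makes the form negative unless B x = 0.\<close>
  have "0 \<le> Re (cinner (x + (- of_real (t * N)) *s y) (B *v (x + (- of_real (t * N)) *s y)))"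
    by (rule psd_form_nonneg[OF psd])
  also have "\<dots> = t * (t * d - 2) * N\<^sup>2"
    unfolding quadratic_form_add_smult xy yx yy using zero by (simp add: algebra_simps power2_eq_square)
  finally have "N\<^sup>2 \<le> 0"
    using t by (smt (verit, best) mult_pos_neg zero_le_mult_iff)
  then have "N = 0" by simp
  then show ?thesis using cinner_self_eq_0_iff[of y] by (simp add: N_def y_def)
qed

lemma psd_offdiag_bound:
  assumes "psd B"
  shows "2 * \<bar>Re (B $ i $ j)\<bar> \<le> Re (B $ i $ i) + Re (B $ j $ j)"
    and "2 * \<bar>Im (B $ i $ j)\<bar> \<le> Re (B $ i $ i) + Re (B $ j $ j)"
proof -
  have herm: "hermitian B" using assms by (rule psd_hermitian)
  have ji: "B $ j $ i = cnj (B $ i $ j)" using herm unfolding hermitian_def by metis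
  have ii: "B $ i $ i = of_real (Re (B $ i $ i))" "B $ j $ j = of_real (Re (B $ j $ j))"
    using hermitian_diag_real[OF herm] by auto
  have q: "0 \<le> Re (B $ i $ i + l * B $ i $ j + cnj l * cnj (B $ i $ j) + cnj l * l * B $ j $ j)" for l
  proof -
    have "0 \<le> Re (cinner (axis i 1 + l *s axis j 1) (B *v (axis i 1 + l *s axis j 1)))"
      by (rule psd_form_nonneg[OF assms])
    then show ?thesis unfolding quadratic_form_add_smult by (simp add: cinner_axis mulv_axis_nth ji)
  qed
  have "0 \<le> Re (B $ i $ i) + 2 * Re (B $ i $ j) + Re (B $ j $ j)" using q[of 1] ii by simp
  moreover have "0 \<le> Re (B $ i $ i) - 2 * Re (B $ i $ j) + Re (B $ j $ j)" using q[of "-1"] ii by simp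
  ultimately show "2 * \<bar>Re (B $ i $ j)\<bar> \<le> Re (B $ i $ i) + Re (B $ j $ j)" by linarith
  have "0 \<le> Re (B $ i $ i) - 2 * Im (B $ i $ j) + Re (B $ j $ j)" using q[of "\<i>"] ii by simp
  moreover have "0 \<le> Re (B $ i $ i) + 2 * Im (B $ i $ j) + Re (B $ j $ j)" using q[of "-\<i>"] ii by simp
  ultimately show "2 * \<bar>Im (B $ i $ j)\<bar> \<le> Re (B $ i $ i) + Re (B $ j $ j)" by linarith
qed

definition schur_complement :: "'n::finite op \<Rightarrow> 'n \<Rightarrow> 'n op" where
  "schur_complement B i =
     B - (1 / Re (B $ i $ i)) *\<^sub>R outer_prod (B *v axis i 1) (B *v axis i 1)"

lemma schur_complement_decomp:
  "B = schur_complement B i + (1 / Re (B $ i $ i)) *\<^sub>R outer_prod (B *v axis i 1) (B *v axis i 1)"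
  by (simp add: schur_complement_def)

lemma psd_diag_pos: "psd B \<Longrightarrow> B $ i $ i \<noteq> 0 \<Longrightarrow> 0 < Re (B $ i $ i)"
  using psd_form_nonneg[of B "axis i 1"] hermitian_diag_real[OF psd_hermitian, of B i]
  by (simp add: cinner_axis mulv_axis_nth) (metis less_eq_real_def of_real_0)

lemma psd_schur_complement:
  fixes B :: "'n::finite op"
  assumes psd: "psd B" and nz: "B $ i $ i \<noteq> 0"
  shows "psd (schur_complement B i)"
proof -
  define v where "v = B *v axis i 1"
  define d where "d = Re (B $ i $ i)"
  have herm: "hermitian B" using psd by (rule psd_hermitian)
  have d: "0 < d" using psd_diag_pos[OF psd nz] by (simp add: d_def)
  have Bii: "B $ i $ i = of_real d" using hermitian_diag_real[OF herm] by (simp add: d_def)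
  have cv: "cinner v x = (B *v x) $ i" for x
    using cinner_mat_adjoint[of "axis i 1" B x] herm
    by (simp add: v_def cinner_axis hermitian_iff_adjoint cnj_cinner)
  have form: "cinner x (schur_complement B i *v x)
      = cinner x (B *v x) - of_real (1 / d) * (cinner x v * cinner v x)" for x
    by (simp add: schur_complement_def v_def d_def matrix_vector_mult_diff_rdistrib scaleR_mulv
        outer_prod_mulv scaleR_eq_smult cinner_diff_right cinner_smult_right)
  have "0 \<le> Re (cinner x (schur_complement B i *v x))" for x
  proof -
    define b where "b = (B *v x) $ i"
    define l where "l = - (b / of_real d)"
    have xv: "cinner x v = cnj b" using cv[of x] by (metis b_def cnj_cinner)
    \<comment> \<open>The form of the complement at x is the form of B at the shifted vector x + l e_i.\<close>
    have "0 \<le> Re (cinner (x + l *s axis i 1) (B *v (x + l *s axis i 1)))"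
      by (rule psd_form_nonneg[OF psd])
    also have "cinner (x + l *s axis i 1) (B *v (x + l *s axis i 1)) =
       cinner x (B *v x) + l * cnj b + cnj l * b + cnj l * l * of_real d"
      unfolding quadratic_form_add_smult using xv
      by (simp add: v_def b_def cinner_axis mulv_axis_nth Bii)
    also have "\<dots> = cinner x (schur_complement B i *v x)"
      unfolding form xv cv[of x, folded b_def] using d by (simp add: l_def field_simps)
    finally show ?thesis .
  qed
  moreover have "hermitian (schur_complement B i)"
    using herm by (simp add: schur_complement_def hermitian_iff_adjoint mat_adjoint_diff
        mat_adjoint_scaleR mat_adjoint_outer_prod)
  ultimately show ?thesis by (simp add: psd_iff_form)
qed

lemma schur_complement_diag:
  assumes psd: "psd B" and nz: "B $ i $ i \<noteq> 0"
  shows "schur_complement B i $ i $ i = 0"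
    and "B $ j $ j = 0 \<Longrightarrow> schur_complement B i $ j $ j = 0"
proof -
  define d where "d = Re (B $ i $ i)"
  have "0 < d" using psd_diag_pos[OF psd nz] by (simp add: d_def)
  moreover have "B $ i $ i = of_real d"
    using hermitian_diag_real[OF psd_hermitian[OF psd]] by (simp add: d_def)
  ultimately show "schur_complement B i $ i $ i = 0"
    by (simp add: schur_complement_def mulv_axis_nth) (simp add: scaleR_conv_of_real field_simps)
  assume Bjj: "B $ j $ j = 0"
  have "B *v axis j 1 = 0"
    by (rule psd_form_eq_0_imp_mulv_eq_0[OF psd]) (simp add: cinner_axis mulv_axis_nth Bjj)
  then have "B $ j $ i = 0" using psd_hermitian[OF psd] unfolding hermitian_def
    by (metis complex_cnj_zero mulv_axis_nth zero_index)
  then show "schur_complement B i $ j $ j = 0" by (simp add: schur_complement_def mulv_axis_nth Bjj)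
qed

lemma schur_complement_range: "\<exists>z. schur_complement B i *v y = B *v z"
proof
  show "schur_complement B i *v y = B *v (y - (of_real (1 / Re (B $ i $ i))
      * cinner (B *v axis i 1) y) *s axis i 1)"
    by (simp add: schur_complement_def matrix_vector_mult_diff_rdistrib
        matrix_vector_mult_diff_distrib scaleR_mulv outer_prod_mulv scaleR_eq_smult matrix_mulv_smult)
qed

lemma psd_induct [consumes 1, case_names zero step]:
  fixes B :: "'n::finite op"
  assumes "psd B"
    and zero: "P 0"
    and step: "\<And>B i. psd B \<Longrightarrow> B $ i $ i \<noteq> 0 \<Longrightarrow> P (schur_complement B i) \<Longrightarrow> P B"
  shows "P B"
proof -
  \<comment> \<open>Each Schur complement step kills one more nonzero diagonal entry.\<close>
  have "psd B \<Longrightarrow> card {j. B $ j $ j \<noteq> 0} = k \<Longrightarrow> P B" for k and B :: "'n op"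
  proof (induction k arbitrary: B rule: less_induct)
    case (less k B)
    show ?case
    proof (cases "\<forall>i. B $ i $ i = 0")
      case True
      have "B *v axis i 1 = 0" for i
        by (rule psd_form_eq_0_imp_mulv_eq_0[OF less.prems(1)]) (simp add: cinner_axis mulv_axis_nth True)
      then have "B = 0" by (simp add: vec_eq_iff) (metis mulv_axis_nth zero_index)
      then show ?thesis using zero by simp
    next
      case False
      then obtain i where i: "B $ i $ i \<noteq> 0" by auto
      have "card {j. schur_complement B i $ j $ j \<noteq> 0} < card {j. B $ j $ j \<noteq> 0}"
        by (rule psubset_card_mono) (use i schur_complement_diag[OF less.prems(1) i] in auto)
      then show ?thesis
        using step[OF less.prems(1) i less.IH[OF _ psd_schur_complement[OF less.prems(1) i] refl]]
          less.prems(2) by simp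
    qed
  qed
  then show ?thesis using assms(1) by blast
qed

lemma trace_mult_psd_nonneg_and_zero:
  assumes A: "psd A" and B: "psd B"
  shows "0 \<le> Re (trace (A ** B)) \<and> (Re (trace (A ** B)) = 0 \<longrightarrow> A ** B = 0)"
  using B
proof (induction B rule: psd_induct)
  case zero
  then show ?case by simp
next
  case (step B i)
  define d where "d = Re (B $ i $ i)"
  define v where "v = B *v axis i 1"
  define B' where "B' = schur_complement B i"
  have d: "0 < d" using psd_diag_pos[OF step(1,2)] by (simp add: d_def)
  have IH: "0 \<le> Re (trace (A ** B')) \<and> (Re (trace (A ** B')) = 0 \<longrightarrow> A ** B' = 0)"
    using step(3) by (simp add: B'_def)
  have q: "0 \<le> Re (cinner v (A *v v))" by (rule psd_form_nonneg[OF A])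
  have B_eq: "B = B' + (1 / d) *\<^sub>R outer_prod v v"
    unfolding B'_def d_def v_def by (rule schur_complement_decomp)
  have tr: "Re (trace (A ** B)) = Re (trace (A ** B')) + Re (cinner v (A *v v)) / d"
    by (simp add: B_eq matrix_add_ldistrib trace_add trace_scaleR
        trace_mult_outer_prod matrix_mult_scaleR_right)
  show ?case
  proof (intro conjI impI)
    show "0 \<le> Re (trace (A ** B))" using tr IH q d by simp
    assume "Re (trace (A ** B)) = 0"
    then have "Re (trace (A ** B')) = 0" and "Re (cinner v (A *v v)) / d = 0"
      using tr IH q d by (smt (verit) divide_nonneg_pos)+
    then have "A ** B' = 0" and "A *v v = 0"
      using IH psd_form_eq_0_imp_mulv_eq_0[OF A] d by auto
    then show "A ** B = 0"
      by (simp add: B_eq matrix_add_ldistrib matrix_mult_scaleR_right matrix_mult_outer_prod vec_eq_iff)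
  qed
qed

lemma trace_mult_psd_nonneg: "psd A \<Longrightarrow> psd B \<Longrightarrow> 0 \<le> Re (trace (A ** B))"
  using trace_mult_psd_nonneg_and_zero by blast

lemma trace_mult_psd_eq_0: "psd A \<Longrightarrow> psd B \<Longrightarrow> Re (trace (A ** B)) = 0 \<Longrightarrow> A ** B = 0"
  using trace_mult_psd_nonneg_and_zero by blast

section \<open>Orthogonal projections and supports\<close>

definition orth_proj :: "'n::finite op \<Rightarrow> bool" where
  "orth_proj P \<longleftrightarrow> hermitian P \<and> P ** P = P"

lemma orth_proj_psd: "orth_proj P \<Longrightarrow> psd P"
proof -
  assume "orth_proj P"
  then have herm: "mat_adjoint P = P" and idem: "P ** P = P"
    by (auto simp: orth_proj_def hermitian_iff_adjoint)
  have "cinner x (P *v x) = cinner (P *v x) (P *v x)" for x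
    by (metis cinner_mat_adjoint herm idem matrix_vector_mul_assoc)
  then show "psd P" using herm by (simp add: psd_iff_form hermitian_iff_adjoint cinner_self_nonneg)
qed

lemma orth_proj_compl: "orth_proj P \<Longrightarrow> orth_proj (mat 1 - P)"
  by (simp add: orth_proj_def hermitian_iff_adjoint mat_adjoint_diff matrix_mult_diff_left
      matrix_mult_diff_right)

lemma orth_proj_enlarge:
  fixes P :: "'n::finite op"
  assumes P: "orth_proj P"
  obtains Q where "orth_proj Q" and "Q *v v = v" and "Q ** P = P"
    and "\<And>x. \<exists>c. Q *v x = P *v x + c *s (v - P *v v)"
proof (cases "v = P *v v")
  case True
  then show ?thesis using P by (intro that[of P]) (auto simp: orth_proj_def intro: exI[of _ 0])
next
  case False
  \<comment> \<open>Add the projector onto the component u of v orthogonal to the range of P.\<close>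
  define u where "u = v - P *v v"
  define N where "N = Re (cinner u u)"
  define Q where "Q = P + (1 / N) *\<^sub>R outer_prod u u"
  have herm: "mat_adjoint P = P" and idem: "P ** P = P"
    using P by (auto simp: orth_proj_def hermitian_iff_adjoint)
  have u: "u \<noteq> 0" using False by (simp add: u_def)
  then have N: "0 < N" using cinner_self_eq_0_iff[of u] cinner_self_nonneg[of u] by (simp add: N_def)
  have uu: "cinner u u = of_real N" unfolding N_def by (rule cinner_self_real)
  have Pu: "P *v u = 0"
    by (simp add: u_def matrix_vector_mult_diff_distrib matrix_vector_mul_assoc idem)
  have "cinner u v = cinner u u + cinner u (P *v v)"
    by (metis cinner_add_right diff_add_cancel u_def)
  also have "cinner u (P *v v) = 0" by (simp add: cinner_mat_adjoint herm Pu)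
  finally have uv: "cinner u v = of_real N" by (simp add: uu)
  have Qx: "Q *v x = P *v x + (of_real (1 / N) * cinner u x) *s u" for x
    by (simp add: Q_def matrix_vector_mult_add_rdistrib scaleR_mulv outer_prod_mulv
        scaleR_eq_smult vector_smult_assoc)
  have "Q *v v = P *v v + u"
    using N by (simp add: Qx uv scaleR_eq_smult vector_smult_assoc flip: of_real_mult)
  then have Qv: "Q *v v = v" by (simp add: u_def)
  have "outer_prod u u ** outer_prod u u = N *\<^sub>R outer_prod u u"
    using uu by (simp add: matrix_mult_outer_prod outer_prod_mulv outer_prod_scaleR)
  moreover have "P ** outer_prod u u = 0" by (simp add: matrix_mult_outer_prod Pu vec_eq_iff)
  moreover have "outer_prod u u ** P = 0" by (simp add: outer_prod_matrix_mult herm Pu vec_eq_iff)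
  ultimately have "orth_proj Q" and "Q ** P = P"
    using N herm idem
    by (simp_all add: Q_def orth_proj_def hermitian_iff_adjoint mat_adjoint_add mat_adjoint_scaleR
        mat_adjoint_outer_prod matrix_add_ldistrib matrix_mult_add_left matrix_mult_scaleR_left
        matrix_mult_scaleR_right)
  then show ?thesis using Qv Qx by (intro that) (auto simp: u_def)
qed

lemma orth_proj_onto_range_exists:
  fixes B :: "'n::finite op"
  assumes "psd B"
  shows "\<exists>P. orth_proj P \<and> P ** B = B \<and> (\<forall>x. \<exists>y. P *v x = B *v y)"
  using assms
proof (induction B rule: psd_induct)
  case zero
  show ?case by (intro exI[of _ 0]) (auto simp: orth_proj_def hermitian_def)
next
  case (step B i)
  define v where "v = B *v axis i 1"
  obtain P where P: "orth_proj P" "P ** schur_complement B i = schur_complement B i"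
    and range_P: "\<And>x. \<exists>y. P *v x = schur_complement B i *v y"
    using step(3) by blast
  obtain Q where Q: "orth_proj Q" "Q *v v = v" "Q ** P = P"
    and Qx: "\<And>x. \<exists>c. Q *v x = P *v x + c *s (v - P *v v)"
    using orth_proj_enlarge[OF P(1)] by blast
  have in_range: "\<exists>z. P *v x = B *v z" for x
    using range_P[of x] schur_complement_range[of B i] by metis
  have "Q ** schur_complement B i = schur_complement B i"
    by (metis P(2) Q(3) matrix_mul_assoc)
  then have "Q ** B = B"
    by (subst (1 2) schur_complement_decomp[of B i])
      (simp add: matrix_add_ldistrib matrix_mult_scaleR_right matrix_mult_outer_prod Q(2)[unfolded v_def])
  moreover have "\<exists>y. Q *v x = B *v y" for x
  proof -
    obtain c where c: "Q *v x = P *v x + c *s (v - P *v v)" using Qx by blast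
    obtain z w where "P *v x = B *v z" "P *v v = B *v w" using in_range by meson
    then have "Q *v x = B *v (z + c *s (axis i 1 - w))"
      by (simp add: c v_def matrix_vector_right_distrib matrix_vector_mult_diff_distrib matrix_mulv_smult)
    then show ?thesis by blast
  qed
  ultimately show ?case using Q(1) by blast
qed

lemma orth_proj_eqI:
  assumes "orth_proj P" "orth_proj Q" "range ((*v) P) = range ((*v) Q)"
  shows "P = Q"
proof -
  have P: "mat_adjoint P = P" "P ** P = P" and Q: "mat_adjoint Q = Q" "Q ** Q = Q"
    using assms(1,2) by (auto simp: orth_proj_def hermitian_iff_adjoint)
  have "P ** Q = Q"
  proof (subst matrix_eq, intro allI)
    fix x
    obtain y where "Q *v x = P *v y" using assms(3) by (metis rangeE rangeI)
    then show "(P ** Q) *v x = Q *v x" by (metis P(2) matrix_vector_mul_assoc)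
  qed
  moreover have "Q ** P = P"
  proof (subst matrix_eq, intro allI)
    fix x
    obtain y where "P *v x = Q *v y" using assms(3) by (metis rangeE rangeI)
    then show "(Q ** P) *v x = P *v x" by (metis Q(2) matrix_vector_mul_assoc)
  qed
  ultimately show ?thesis by (metis P(1) Q(1) mat_adjoint_mult)
qed

lemma supp_proj:
  fixes \<rho> :: "'n::finite op"
  assumes "psd \<rho>"
  shows "orth_proj (supp_proj \<rho>)" and "supp_proj \<rho> ** \<rho> = \<rho>"
    and "\<And>x. \<exists>y. supp_proj \<rho> *v x = \<rho> *v y"
proof -
  obtain P where P: "orth_proj P" "P ** \<rho> = \<rho>" "\<And>x. \<exists>y. P *v x = \<rho> *v y"
    using orth_proj_onto_range_exists[OF assms] by blast
  have range: "range ((*v) P) = range ((*v) \<rho>)"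
  proof
    show "range ((*v) P) \<subseteq> range ((*v) \<rho>)" using P(3) by blast
    show "range ((*v) \<rho>) \<subseteq> range ((*v) P)"
    proof
      fix z assume "z \<in> range ((*v) \<rho>)"
      then obtain x where "z = \<rho> *v x" by blast
      then have "z = P *v (\<rho> *v x)" by (metis P(2) matrix_vector_mul_assoc)
      then show "z \<in> range ((*v) P)" by blast
    qed
  qed
  have "supp_proj \<rho> = P"
    unfolding supp_proj_def
  proof (rule the_equality)
    show "hermitian P \<and> P ** P = P \<and> range ((*v) P) = range ((*v) \<rho>)"
      using P(1) range by (simp add: orth_proj_def)
    fix Q assume "hermitian Q \<and> Q ** Q = Q \<and> range ((*v) Q) = range ((*v) \<rho>)"
    then show "Q = P" using orth_proj_eqI[of Q P] P(1) range by (simp add: orth_proj_def)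
  qed
  then show "orth_proj (supp_proj \<rho>)" "supp_proj \<rho> ** \<rho> = \<rho>" "\<And>x. \<exists>y. supp_proj \<rho> *v x = \<rho> *v y"
    using P by auto
qed

lemma trace_orth_proj_mult_bounds:
  assumes "orth_proj P" "psd \<sigma>"
  shows "0 \<le> Re (trace (P ** \<sigma>))" and "Re (trace (P ** \<sigma>)) \<le> Re (trace \<sigma>)"
proof -
  show "0 \<le> Re (trace (P ** \<sigma>))"
    by (rule trace_mult_psd_nonneg[OF orth_proj_psd[OF assms(1)] assms(2)])
  have "0 \<le> Re (trace ((mat 1 - P) ** \<sigma>))"
    by (rule trace_mult_psd_nonneg[OF orth_proj_psd[OF orth_proj_compl[OF assms(1)]] assms(2)])
  then show "Re (trace (P ** \<sigma>)) \<le> Re (trace \<sigma>)" by (simp add: matrix_mult_diff_left trace_sub)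
qed

lemma supp_proj_mult_summand:
  assumes A: "psd A" and B: "psd B" and a: "0 < a" and b: "0 \<le> b"
  shows "supp_proj (a *\<^sub>R A + b *\<^sub>R B) ** A = A"
proof -
  define M where "M = a *\<^sub>R A + b *\<^sub>R B"
  have M: "psd M" using assms by (simp add: M_def psd_add psd_scaleR)
  define Q where "Q = mat 1 - supp_proj M"
  have Q: "psd Q" using orth_proj_psd[OF orth_proj_compl[OF supp_proj(1)[OF M]]] by (simp add: Q_def)
  have "Q ** M = 0" using supp_proj(2)[OF M] by (simp add: Q_def matrix_mult_diff_left)
  then have "Re (trace (Q ** M)) = 0" by simp
  then have "a * Re (trace (Q ** A)) + b * Re (trace (Q ** B)) = 0"
    by (simp add: M_def matrix_add_ldistrib matrix_mult_scaleR_right trace_add trace_scaleR)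
  moreover have "0 \<le> Re (trace (Q ** A))" "0 \<le> Re (trace (Q ** B))"
    using trace_mult_psd_nonneg[OF Q] A B by auto
  ultimately have "Re (trace (Q ** A)) = 0" using a b
    by (smt (verit) mult_nonneg_nonneg mult_pos_pos)
  then have "Q ** A = 0" by (rule trace_mult_psd_eq_0[OF Q A])
  then show ?thesis by (simp add: Q_def matrix_mult_diff_left M_def)
qed

section \<open>Zero-error tests\<close>

definition zero_error_tests :: "'n::finite op \<Rightarrow> 'n op set" where
  "zero_error_tests \<rho> = {P. psd P \<and> psd (mat 1 - P) \<and> trace (P ** \<rho>) = 1}"

lemma DH0_eq_SUP_zero_error_tests:
  "DH0 \<rho> \<sigma> = (SUP P \<in> zero_error_tests \<rho>. - elog2 (Re (trace (P ** \<sigma>))))"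
  by (simp add: DH0_def zero_error_tests_def)

lemma zero_error_test_fixes:
  assumes P: "P \<in> zero_error_tests \<rho>" and \<rho>: "density \<rho>"
  shows "P ** \<rho> = \<rho>" and "P ** supp_proj \<rho> = supp_proj \<rho>"
proof -
  have "Re (trace ((mat 1 - P) ** \<rho>)) = 0"
    using P \<rho> by (simp add: zero_error_tests_def density_def matrix_mult_diff_left trace_sub)
  then have "(mat 1 - P) ** \<rho> = 0"
    by (rule trace_mult_psd_eq_0[rotated 2]) (use P \<rho> in \<open>auto simp: zero_error_tests_def density_def\<close>)
  then show P\<rho>: "P ** \<rho> = \<rho>" by (simp add: matrix_mult_diff_left)
  show "P ** supp_proj \<rho> = supp_proj \<rho>"
  proof (subst matrix_eq, intro allI)
    fix x
    obtain y where "supp_proj \<rho> *v x = \<rho> *v y"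
      using supp_proj(3) \<rho> by (auto simp: density_def)
    then show "(P ** supp_proj \<rho>) *v x = supp_proj \<rho> *v x"
      by (metis P\<rho> matrix_vector_mul_assoc)
  qed
qed

lemma trace_supp_proj_le_zero_error_test:
  assumes P: "P \<in> zero_error_tests \<rho>" and \<rho>: "density \<rho>" and f: "psd f"
  shows "Re (trace (supp_proj \<rho> ** f)) \<le> Re (trace (P ** f))"
proof -
  define S where "S = supp_proj \<rho>"
  have S: "orth_proj S" using \<rho> by (simp add: S_def density_def supp_proj(1))
  then have herm: "mat_adjoint S = S" and idem: "S ** S = S"
    by (auto simp: orth_proj_def hermitian_iff_adjoint)
  have "mat_adjoint P = P" using P by (simp add: zero_error_tests_def psd_def hermitian_iff_adjoint)
  moreover have PS: "P ** S = S" using zero_error_test_fixes(2)[OF P \<rho>] by (simp add: S_def)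
  ultimately have SP: "S ** P = S" by (metis herm mat_adjoint_mult)
  \<comment> \<open>P dominates S because P - S = (1 - S) P (1 - S) is positive.\<close>
  have "(mat 1 - S) ** P ** (mat 1 - S) = P - S"
    by (simp add: matrix_mult_diff_left matrix_mult_diff_right PS SP idem
        flip: matrix_mul_assoc)
  then have "psd (P - S)"
    using psd_sandwich[of P "mat 1 - S"] P orth_proj_compl[OF S]
    by (simp add: zero_error_tests_def orth_proj_def)
  then have "0 \<le> Re (trace ((P - S) ** f))" using trace_mult_psd_nonneg f by blast
  then show ?thesis by (simp add: S_def matrix_mult_diff_left trace_sub)
qed

lemma bounded_zero_error_tests: "bounded (zero_error_tests \<rho>)"
  unfolding bounded_iff
proof (intro exI ballI)
  fix P assume P: "P \<in> zero_error_tests \<rho>"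
  have diag: "Re (P $ k $ k) \<le> 1" for k
    using P psd_form_nonneg[of "mat 1 - P" "axis k 1"]
    by (simp add: zero_error_tests_def cinner_axis mulv_axis_nth mat_def)
  have entry: "cmod (P $ i $ j) \<le> 2" for i j
  proof -
    have "\<bar>Re (P $ i $ j)\<bar> \<le> 1" "\<bar>Im (P $ i $ j)\<bar> \<le> 1"
      using psd_offdiag_bound[of P i j] P diag[of i] diag[of j]
      by (auto simp: zero_error_tests_def)
    then show ?thesis using cmod_le[of "P $ i $ j"] by linarith
  qed
  have "norm P \<le> (\<Sum>i\<in>UNIV. norm (P $ i))" by (simp add: norm_vec_def L2_set_le_sum)
  also have "\<dots> \<le> (\<Sum>i\<in>UNIV. \<Sum>j\<in>UNIV. cmod (P $ i $ j))"
    by (intro sum_mono) (simp add: norm_vec_def L2_set_le_sum)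
  also have "\<dots> \<le> (\<Sum>i\<in>(UNIV::'a set). \<Sum>j\<in>(UNIV::'a set). 2)"
    by (intro sum_mono entry)
  finally show "norm P \<le> (\<Sum>i\<in>(UNIV::'a set). \<Sum>j\<in>(UNIV::'a set). 2::real)" .
qed

lemma continuous_on_cinner_mulv [continuous_intros]:
  "continuous_on S f \<Longrightarrow> continuous_on S (\<lambda>P. cinner x (f P *v y))"
  unfolding cinner_def matrix_vector_mult_def by (intro continuous_intros) simp

lemma continuous_on_trace_mult [continuous_intros]:
  fixes f :: "'a::topological_space \<Rightarrow> 'n::finite op"
  assumes "continuous_on S f"
  shows "continuous_on S (\<lambda>P. trace (f P ** A))"
  unfolding trace_def matrix_matrix_mult_def by (simp, intro continuous_intros assms)

lemma closed_zero_error_tests: "closed (zero_error_tests \<rho>)"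
proof -
  have "zero_error_tests \<rho> =
      {P. \<forall>i j. P $ i $ j = cnj (P $ j $ i)} \<inter> {P. \<forall>x. 0 \<le> Re (cinner x (P *v x))}
      \<inter> {P. \<forall>i j. (mat 1 - P) $ i $ j = cnj ((mat 1 - P) $ j $ i)}
      \<inter> {P. \<forall>x. 0 \<le> Re (cinner x ((mat 1 - P) *v x))} \<inter> {P. trace (P ** \<rho>) = 1}"
    by (auto simp: zero_error_tests_def psd_iff_form hermitian_def)
  then show ?thesis
    by (simp only:) (intro closed_Int closed_Collect_all closed_Collect_le closed_Collect_eq
        continuous_intros)
qed

lemma compact_zero_error_tests: "compact (zero_error_tests \<rho>)"
  by (simp add: compact_eq_bounded_closed bounded_zero_error_tests closed_zero_error_tests)

lemma trace_mult_convex_comb: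
  fixes P Q A :: "'n::finite op"
  shows "trace ((u *\<^sub>R P + v *\<^sub>R Q) ** A) = of_real u * trace (P ** A) + of_real v * trace (Q ** A)"
  by (simp add: matrix_mult_add_left trace_add trace_scaleR matrix_mult_scaleR_left)

lemma convex_zero_error_tests: "convex (zero_error_tests \<rho>)"
  unfolding convex_def
proof (intro ballI allI impI)
  fix P Q and u v :: real
  assume P: "P \<in> zero_error_tests \<rho>" and Q: "Q \<in> zero_error_tests \<rho>"
    and uv: "0 \<le> u" "0 \<le> v" "u + v = 1"
  have "mat 1 - (u *\<^sub>R P + v *\<^sub>R Q) = u *\<^sub>R (mat 1 - P) + v *\<^sub>R (mat 1 - Q)"
    using uv by (simp add: algebra_simps flip: scaleR_add_left)
  then show "u *\<^sub>R P + v *\<^sub>R Q \<in> zero_error_tests \<rho>"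
    using P Q uv
    by (simp add: zero_error_tests_def psd_add psd_scaleR trace_mult_convex_comb flip: of_real_add)
qed

section \<open>Min-relative entropies and robustness\<close>

lemma elog2_pos: "0 < x \<Longrightarrow> elog2 x = ereal (log 2 x)"
  by (simp add: elog2_def)

lemma elog2_mono: "x \<le> y \<Longrightarrow> elog2 x \<le> elog2 y"
  by (auto simp: elog2_def)

lemma Dmin_nonneg:
  assumes "psd \<rho>" "density \<sigma>"
  shows "0 \<le> Dmin \<rho> \<sigma>"
proof -
  have "Re (trace (supp_proj \<rho> ** \<sigma>)) \<le> 1"
    using trace_orth_proj_mult_bounds(2)[OF supp_proj(1)[OF assms(1)], of \<sigma>] assms(2)
    by (simp add: density_def)
  then have "elog2 (Re (trace (supp_proj \<rho> ** \<sigma>))) \<le> 0"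
    using elog2_mono[of _ 1] by (simp add: elog2_def)
  then show ?thesis by (simp add: Dmin_def)
qed

lemma Dmin_eq_0: "supp_proj \<rho> ** \<sigma> = \<sigma> \<Longrightarrow> trace \<sigma> = 1 \<Longrightarrow> Dmin \<rho> \<sigma> = 0"
  by (simp add: Dmin_def elog2_def)

lemma Dmin_le_of_trace_ge:
  "0 < t \<Longrightarrow> t \<le> Re (trace (supp_proj \<rho> ** \<sigma>)) \<Longrightarrow> Dmin \<rho> \<sigma> \<le> ereal (- log 2 t)"
  unfolding Dmin_def using elog2_mono[of t] by (simp add: elog2_pos)

lemma DH0_le_Dmin:
  assumes "density \<rho>" "psd f"
  shows "DH0 \<rho> f \<le> Dmin \<rho> f"
  unfolding DH0_eq_SUP_zero_error_tests Dmin_def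
proof (rule SUP_least)
  fix P assume "P \<in> zero_error_tests \<rho>"
  then have "Re (trace (supp_proj \<rho> ** f)) \<le> Re (trace (P ** f))"
    by (rule trace_supp_proj_le_zero_error_test[OF _ assms])
  then show "- elog2 (Re (trace (P ** f))) \<le> - elog2 (Re (trace (supp_proj \<rho> ** f)))"
    by (simp add: elog2_mono)
qed

lemma DH0_nonneg:
  assumes "density \<rho>" "trace \<theta> = 1"
  shows "0 \<le> DH0 \<rho> \<theta>"
proof -
  have "mat 1 \<in> zero_error_tests \<rho>"
    using assms(1) by (simp add: zero_error_tests_def psd_mat_1 psd_0 density_def)
  then have "- elog2 (Re (trace (mat 1 ** \<theta>))) \<le> DH0 \<rho> \<theta>"
    unfolding DH0_eq_SUP_zero_error_tests by (rule SUP_upper)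
  then show ?thesis using assms(2) by (simp add: elog2_def zero_ereal_def)
qed

lemma trace_affine_hull:
  assumes "\<forall>\<sigma>\<in>F. trace \<sigma> = 1" "\<theta> \<in> affine hull F"
  shows "trace \<theta> = (1::complex)"
proof -
  have "affine {X::'n::finite op. trace X = 1}"
    unfolding affine_def by (auto simp: trace_add trace_scaleR simp flip: distrib_right of_real_add)
  moreover have "F \<subseteq> {X. trace X = 1}" using assms(1) by blast
  ultimately have "affine hull F \<subseteq> {X. trace X = 1}" by (rule hull_minimal[rotated])
  then show ?thesis using assms(2) by blast
qed

lemma density_convex_comb:
  "density A \<Longrightarrow> density B \<Longrightarrow> 0 \<le> a \<Longrightarrow> a \<le> 1 \<Longrightarrow> density (a *\<^sub>R A + (1 - a) *\<^sub>R B)"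
  by (auto simp: density_def trace_add trace_scaleR intro!: psd_add psd_scaleR)

definition log_robustness :: "'n::finite op set \<Rightarrow> 'n op set \<Rightarrow> 'n op \<Rightarrow> ereal" where
  "log_robustness T F \<rho> = (INF s \<in> {s::real. 0 \<le> s \<and>
      (\<exists>\<tau>\<in>T. (1 / (1 + s)) *\<^sub>R (\<rho> + s *\<^sub>R \<tau>) \<in> F)}. ereal (log 2 (1 + s)))"

lemma Dmax_F_eq_log_robustness: "Dmax_F F \<rho> = log_robustness {\<tau>. density \<tau>} F \<rho>"
  by (simp add: Dmax_F_def log_robustness_def)

lemma Ds_F_eq_log_robustness: "Ds_F F \<rho> = log_robustness F F \<rho>"
  by (simp add: Ds_F_def log_robustness_def)

text \<open>Mixtures are parametrised by the weight w = 1 / (1 + s) of \<rho> rather than by s.\<close>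

lemma log_robustness_le:
  assumes "\<tau> \<in> T" "0 < w" "w \<le> 1" "w *\<^sub>R \<rho> + (1 - w) *\<^sub>R \<tau> \<in> F"
  shows "log_robustness T F \<rho> \<le> ereal (- log 2 w)"
proof -
  define s where "s = 1 / w - 1"
  have s: "0 \<le> s" using assms(2,3) by (simp add: s_def field_simps)
  have "1 / (1 + s) = w" "w * s = 1 - w" using assms(2) by (simp_all add: s_def field_simps)
  then have "(1 / (1 + s)) *\<^sub>R (\<rho> + s *\<^sub>R \<tau>) = w *\<^sub>R \<rho> + (1 - w) *\<^sub>R \<tau>"
    by (simp add: scaleR_add_right)
  then have "log_robustness T F \<rho> \<le> ereal (log 2 (1 + s))"
    unfolding log_robustness_def using assms(1,4) s by (intro INF_lower) (auto intro!: bexI[of _ \<tau>])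
  also have "log 2 (1 + s) = - log 2 w" using assms(2) by (simp add: s_def log_divide)
  finally show ?thesis .
qed

lemma log_robustness_geI:
  assumes "\<And>w \<tau>. \<tau> \<in> T \<Longrightarrow> 0 < w \<Longrightarrow> w \<le> 1 \<Longrightarrow> w *\<^sub>R \<rho> + (1 - w) *\<^sub>R \<tau> \<in> F \<Longrightarrow>
      c \<le> ereal (- log 2 w)"
  shows "c \<le> log_robustness T F \<rho>"
  unfolding log_robustness_def
proof (rule INF_greatest)
  fix s assume "s \<in> {s. 0 \<le> s \<and> (\<exists>\<tau>\<in>T. (1 / (1 + s)) *\<^sub>R (\<rho> + s *\<^sub>R \<tau>) \<in> F)}"
  then obtain \<tau> where s: "0 \<le> s" and \<tau>: "\<tau> \<in> T" and mix: "(1 / (1 + s)) *\<^sub>R (\<rho> + s *\<^sub>R \<tau>) \<in> F"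
    by blast
  have "(1 / (1 + s)) *\<^sub>R (\<rho> + s *\<^sub>R \<tau>) = (1 / (1 + s)) *\<^sub>R \<rho> + (1 - 1 / (1 + s)) *\<^sub>R \<tau>"
    using s by (simp add: scaleR_add_right field_simps)
  then have "c \<le> ereal (- log 2 (1 / (1 + s)))"
    using assms[OF \<tau>] mix s by simp
  then show "c \<le> ereal (log 2 (1 + s))" using s by (simp add: log_divide)
qed

lemma log_robustness_antimono: "T \<subseteq> T' \<Longrightarrow> log_robustness T' F \<rho> \<le> log_robustness T F \<rho>"
  unfolding log_robustness_def by (rule INF_superset_mono) auto

lemma log_robustness_nonneg: "0 \<le> log_robustness T F \<rho>"
  unfolding log_robustness_def by (rule INF_greatest) (auto simp: zero_ereal_def)

lemma Dmin_F_le_Dmax_F: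
  assumes \<rho>: "density \<rho>"
  shows "Dmin_F F \<rho> \<le> Dmax_F F \<rho>"
  unfolding Dmax_F_eq_log_robustness
proof (rule log_robustness_geI)
  fix w \<tau> assume \<tau>: "\<tau> \<in> {\<tau>. density \<tau>}" and w: "0 < w" "w \<le> 1"
    and mix: "w *\<^sub>R \<rho> + (1 - w) *\<^sub>R \<tau> \<in> F"
  have "0 \<le> Re (trace (supp_proj \<rho> ** \<tau>))"
    using trace_orth_proj_mult_bounds(1) supp_proj(1) \<rho> \<tau> by (auto simp: density_def)
  then have "w \<le> Re (trace (supp_proj \<rho> ** (w *\<^sub>R \<rho> + (1 - w) *\<^sub>R \<tau>)))"
    using \<rho> w supp_proj(2)[of \<rho>]
    by (simp add: density_def matrix_add_ldistrib matrix_mult_scaleR_right trace_add trace_scaleR)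
  then have "Dmin \<rho> (w *\<^sub>R \<rho> + (1 - w) *\<^sub>R \<tau>) \<le> ereal (- log 2 w)"
    by (rule Dmin_le_of_trace_ge[OF w(1)])
  then show "Dmin_F F \<rho> \<le> ereal (- log 2 w)"
    unfolding Dmin_F_def using mix by (meson INF_lower order_trans)
qed

lemma elog2_divide: "0 < t \<Longrightarrow> elog2 (x / t) = ereal (- log 2 t) + elog2 x"
  by (simp add: elog2_def divide_le_0_iff log_divide not_le)

lemma density_mixture_regroup:
  fixes A :: "'n::finite op"
  assumes B: "density B" and \<tau>: "density \<tau>" and w: "0 < w" "w \<le> 1" and \<kappa>: "0 < \<kappa>" "\<kappa> \<le> 1"
  obtains \<tau>' where "density \<tau>'"
    and "w *\<^sub>R (\<kappa> *\<^sub>R A + (1 - \<kappa>) *\<^sub>R B) + (1 - w) *\<^sub>R \<tau> = (w * \<kappa>) *\<^sub>R A + (1 - w * \<kappa>) *\<^sub>R \<tau>'"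
proof (cases "w * \<kappa> = 1")
  case True
  moreover have "w * \<kappa> \<le> w" using w \<kappa> by (simp add: mult_left_le)
  ultimately have "w = 1" "\<kappa> = 1" using w by auto
  then show ?thesis using that[OF B] by simp
next
  case False
  moreover have "w * \<kappa> \<le> 1" using w \<kappa> by (simp add: mult_le_one)
  ultimately have w\<kappa>: "w * \<kappa> < 1" by simp
  define c where "c = w * (1 - \<kappa>) / (1 - w * \<kappa>)"
  have c: "0 \<le> c" "c \<le> 1" using w \<kappa> w\<kappa> by (auto simp: c_def field_simps)
  have "(1 - w * \<kappa>) * c = w * (1 - \<kappa>)" "(1 - w * \<kappa>) * (1 - c) = 1 - w"
    using w\<kappa> by (simp_all add: c_def field_simps)
  then have "w *\<^sub>R (\<kappa> *\<^sub>R A + (1 - \<kappa>) *\<^sub>R B) + (1 - w) *\<^sub>R \<tau>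
      = (w * \<kappa>) *\<^sub>R A + (1 - w * \<kappa>) *\<^sub>R (c *\<^sub>R B + (1 - c) *\<^sub>R \<tau>)"
    by (simp add: scaleR_add_right add.assoc)
  then show ?thesis using that density_convex_comb[OF B \<tau> c] by blast
qed

lemma Dmax_F_convex_comb_ge:
  assumes B: "density B" and r: "ereal r \<le> Dmax_F F A"
    and \<kappa>: "0 \<le> \<kappa>" "\<kappa> \<le> 1"
  shows "ereal r + elog2 \<kappa> \<le> Dmax_F F (\<kappa> *\<^sub>R A + (1 - \<kappa>) *\<^sub>R B)"
proof (cases "\<kappa> = 0")
  case True
  then show ?thesis by (simp add: elog2_def)
next
  case False
  with \<kappa> have \<kappa>: "0 < \<kappa>" "\<kappa> \<le> 1" by auto
  show ?thesis
    unfolding Dmax_F_eq_log_robustness[of F "\<kappa> *\<^sub>R A + (1 - \<kappa>) *\<^sub>R B"]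
  proof (rule log_robustness_geI)
    fix w \<tau> assume \<tau>: "\<tau> \<in> {\<tau>. density \<tau>}" and w: "0 < w" "w \<le> 1"
      and mix: "w *\<^sub>R (\<kappa> *\<^sub>R A + (1 - \<kappa>) *\<^sub>R B) + (1 - w) *\<^sub>R \<tau> \<in> F"
    obtain \<tau>' where \<tau>': "density \<tau>'" and eq: "w *\<^sub>R (\<kappa> *\<^sub>R A + (1 - \<kappa>) *\<^sub>R B) + (1 - w) *\<^sub>R \<tau>
        = (w * \<kappa>) *\<^sub>R A + (1 - w * \<kappa>) *\<^sub>R \<tau>'"
      using density_mixture_regroup[OF B _ w \<kappa>] \<tau> by blast
    have "0 < w * \<kappa>" "w * \<kappa> \<le> 1" using w \<kappa> by (auto intro: mult_le_one)
    then have "Dmax_F F A \<le> ereal (- log 2 (w * \<kappa>))"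
      unfolding Dmax_F_eq_log_robustness using \<tau>' mix[unfolded eq] by (intro log_robustness_le) auto
    then have "ereal r \<le> ereal (- log 2 (w * \<kappa>))" by (rule order_trans[OF r])
    then show "ereal r + elog2 \<kappa> \<le> ereal (- log 2 w)"
      using w \<kappa> by (simp add: elog2_pos log_mult)
  qed
qed

lemma convex_comb_rescale:
  fixes x y :: "'a::real_vector"
  assumes "b \<noteq> 0"
  shows "(a / b) *\<^sub>R (b *\<^sub>R x + (1 - b) *\<^sub>R y) + (1 - a / b) *\<^sub>R y = a *\<^sub>R x + (1 - a) *\<^sub>R y"
proof -
  have "(a / b) * b = a" "(a / b) * (1 - b) + (1 - a / b) = 1 - a"
    using assms by (simp_all add: field_simps)
  then show ?thesis by (simp add: scaleR_add_right add.assoc flip: scaleR_add_left)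
qed

lemma log_robustness_convex_comb_le:
  assumes \<sigma>: "\<sigma> \<in> T" and q: "0 < q" "q \<le> \<kappa>" and \<omega>: "q *\<^sub>R \<Phi> + (1 - q) *\<^sub>R \<sigma> \<in> F"
  shows "log_robustness T F (\<kappa> *\<^sub>R \<Phi> + (1 - \<kappa>) *\<^sub>R \<sigma>) \<le> ereal (log 2 \<kappa> - log 2 q)"
proof -
  have "(q / \<kappa>) *\<^sub>R (\<kappa> *\<^sub>R \<Phi> + (1 - \<kappa>) *\<^sub>R \<sigma>) + (1 - q / \<kappa>) *\<^sub>R \<sigma> \<in> F"
    using \<omega> q by (simp add: convex_comb_rescale)
  then have "log_robustness T F (\<kappa> *\<^sub>R \<Phi> + (1 - \<kappa>) *\<^sub>R \<sigma>) \<le> ereal (- log 2 (q / \<kappa>))"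
    using \<sigma> q by (intro log_robustness_le) simp_all
  also have "- log 2 (q / \<kappa>) = log 2 \<kappa> - log 2 q" using q by (simp add: log_divide)
  finally show ?thesis .
qed

section \<open>Free states and the interpolating family\<close>

lemma halfplane_shift_bound:
  fixes a e b c :: real
  assumes "a * c < b"
  obtains \<beta> \<mu> where "c < \<beta>" and "\<And>x y. c \<le> x \<Longrightarrow> b < a * x + e * y \<Longrightarrow> \<beta> \<le> x + \<mu> * y"
proof
  define M where "M = 1 / (1 + \<bar>a\<bar>)"
  have M: "0 < M" "M * a < 1" by (auto simp: M_def field_simps)
  show "c < c + M * (b - a * c)" using assms M by simp
  fix x y assume x: "c \<le> x" and xy: "b < a * x + e * y"
  have "M * b < M * (a * x + e * y)" using xy M by simp
  moreover have "c * (1 - M * a) \<le> x * (1 - M * a)" using x M by (simp add: mult_right_mono)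
  ultimately show "c + M * (b - a * c) \<le> x + (M * e) * y" by (simp add: algebra_simps)
qed

lemma linear_trace_pair: "linear (\<lambda>P::'n::finite op. (Re (trace (P ** X)), Re (trace (P ** Y))))"
  by (rule linearI) (simp_all add: matrix_mult_add_left matrix_mult_scaleR_left trace_add trace_scaleR)

lemma compact_convex_trace_pair_image:
  fixes X Y \<rho> :: "'n::finite op"
  defines "K \<equiv> (\<lambda>P::'n op. (Re (trace (P ** X)), Re (trace (P ** Y)))) ` zero_error_tests \<rho>"
  shows "compact K" and "convex K"
proof -
  have "bounded_linear (\<lambda>P::'n op. (Re (trace (P ** X)), Re (trace (P ** Y))))"
    using linear_trace_pair by (rule linear_conv_bounded_linear[THEN iffD1])
  then show "compact K"
    unfolding K_def by (intro compact_continuous_image linear_continuous_on compact_zero_error_tests)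
  show "convex K"
    unfolding K_def by (rule convex_linear_image[OF linear_trace_pair convex_zero_error_tests])
qed

locale free_states =
  fixes F :: "'n::finite op set"
  assumes density_free: "\<sigma> \<in> F \<Longrightarrow> density \<sigma>"
begin

lemma Dmin_F_nonneg: "psd \<rho> \<Longrightarrow> 0 \<le> Dmin_F F \<rho>"
  unfolding Dmin_F_def by (rule INF_greatest) (simp add: Dmin_nonneg density_free)

lemma Dmin_F_eq_0I:
  assumes "\<sigma> \<in> F" "psd \<rho>" "supp_proj \<rho> ** \<sigma> = \<sigma>"
  shows "Dmin_F F \<rho> = 0"
proof -
  have "Dmin_F F \<rho> \<le> Dmin \<rho> \<sigma>" unfolding Dmin_F_def by (rule INF_lower) fact
  also have "Dmin \<rho> \<sigma> = 0"
    using assms(3) density_free[OF assms(1)] by (simp add: Dmin_eq_0 density_def)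
  finally show ?thesis using Dmin_F_nonneg[OF assms(2)] by simp
qed

lemma Dmin_aff_le_Dmin_F:
  assumes "density \<rho>"
  shows "Dmin_aff F \<rho> \<le> Dmin_F F \<rho>"
proof -
  have "Dmin_aff F \<rho> \<le> (INF \<sigma>\<in>F. DH0 \<rho> \<sigma>)"
    unfolding Dmin_aff_def by (rule INF_superset_mono) (auto simp: hull_subset[THEN subsetD])
  also have "\<dots> \<le> Dmin_F F \<rho>"
    unfolding Dmin_F_def
    by (rule INF_mono) (use DH0_le_Dmin[OF assms] density_free in \<open>auto simp: density_def\<close>)
  finally show ?thesis .
qed

lemma trace_affine_hull_free: "\<theta> \<in> affine hull F \<Longrightarrow> trace \<theta> = 1"
  by (rule trace_affine_hull) (auto dest: density_free simp: density_def)

lemma Dmin_aff_nonneg: "density \<rho> \<Longrightarrow> 0 \<le> Dmin_aff F \<rho>"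
  unfolding Dmin_aff_def by (rule INF_greatest) (simp add: DH0_nonneg trace_affine_hull_free)

lemma Dmax_F_le_Ds_F: "Dmax_F F \<rho> \<le> Ds_F F \<rho>"
  unfolding Dmax_F_eq_log_robustness Ds_F_eq_log_robustness
  by (rule log_robustness_antimono) (auto simp: density_free)

lemma Dmin_F_convex_comb_free_eq_0:
  assumes "\<sigma> \<in> F" "density \<Phi>" "0 \<le> \<kappa>" "\<kappa> < 1"
  shows "Dmin_F F (\<kappa> *\<^sub>R \<Phi> + (1 - \<kappa>) *\<^sub>R \<sigma>) = 0"
proof (rule Dmin_F_eq_0I[OF assms(1)])
  have "psd \<sigma>" "psd \<Phi>" using assms(1,2) density_free by (auto simp: density_def)
  then show "psd (\<kappa> *\<^sub>R \<Phi> + (1 - \<kappa>) *\<^sub>R \<sigma>)" using assms(3,4) by (simp add: psd_add psd_scaleR)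
  show "supp_proj (\<kappa> *\<^sub>R \<Phi> + (1 - \<kappa>) *\<^sub>R \<sigma>) ** \<sigma> = \<sigma>"
    using supp_proj_mult_summand[OF \<open>psd \<sigma>\<close> \<open>psd \<Phi>\<close>, of "1 - \<kappa>" \<kappa>] assms(3,4)
    by (simp add: add.commute)
qed

lemma Dmin_F_free_interpolation:
  assumes "\<sigma> \<in> F" "density \<Phi>" "Dmin_F F \<Phi> = ereal r" "0 \<le> \<kappa>" "\<kappa> \<le> 1"
  shows "Dmin_F F (\<kappa> *\<^sub>R \<Phi> + (1 - \<kappa>) *\<^sub>R \<sigma>) = (if \<kappa> < 1 then 0 else ereal r)"
proof (cases "\<kappa> < 1")
  case True
  then show ?thesis using Dmin_F_convex_comb_free_eq_0[OF assms(1,2,4)] by simp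
next
  case False
  then have "\<kappa> = 1" using assms(5) by simp
  then show ?thesis using assms(3) by simp
qed

lemma Dmax_Ds_free_interpolation:
  assumes convex: "convex F" and \<Phi>: "density \<Phi>" and r: "Dmin_F F \<Phi> = ereal r"
    and \<sigma>: "\<sigma> \<in> F" and \<omega>: "2 powr (-r) *\<^sub>R \<Phi> + (1 - 2 powr (-r)) *\<^sub>R \<sigma> \<in> F"
    and \<kappa>: "0 \<le> \<kappa>" "\<kappa> \<le> 1"
  shows "Dmax_F F (\<kappa> *\<^sub>R \<Phi> + (1 - \<kappa>) *\<^sub>R \<sigma>) = max (ereal r + elog2 \<kappa>) 0"
    and "Ds_F F (\<kappa> *\<^sub>R \<Phi> + (1 - \<kappa>) *\<^sub>R \<sigma>) = max (ereal r + elog2 \<kappa>) 0"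
proof -
  define q where "q = 2 powr (-r)"
  define \<Phi>\<kappa> where "\<Phi>\<kappa> = \<kappa> *\<^sub>R \<Phi> + (1 - \<kappa>) *\<^sub>R \<sigma>"
  have "0 \<le> r" using Dmin_F_nonneg[of \<Phi>] \<Phi> r by (simp add: density_def)
  then have q: "0 < q" "q \<le> 1" using powr_mono[of "-r" 0 "2::real"] by (simp_all add: q_def)
  have "ereal r \<le> Dmax_F F \<Phi>" using Dmin_F_le_Dmax_F[where F = F, OF \<Phi>] r by simp
  then have "ereal r + elog2 \<kappa> \<le> Dmax_F F \<Phi>\<kappa>"
    unfolding \<Phi>\<kappa>_def by (rule Dmax_F_convex_comb_ge[OF density_free[OF \<sigma>] _ \<kappa>])
  moreover have "0 \<le> Dmax_F F \<Phi>\<kappa>" by (simp add: Dmax_F_eq_log_robustness log_robustness_nonneg)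
  ultimately have lower: "max (ereal r + elog2 \<kappa>) 0 \<le> Dmax_F F \<Phi>\<kappa>" by simp
  have upper: "Ds_F F \<Phi>\<kappa> \<le> max (ereal r + elog2 \<kappa>) 0"
  proof (cases "\<kappa> \<le> q")
    case True
    have "\<Phi>\<kappa> = (\<kappa> / q) *\<^sub>R (q *\<^sub>R \<Phi> + (1 - q) *\<^sub>R \<sigma>) + (1 - \<kappa> / q) *\<^sub>R \<sigma>"
      using q by (simp add: \<Phi>\<kappa>_def convex_comb_rescale)
    also have "\<dots> \<in> F"
      using convexD[OF convex \<omega>[folded q_def] \<sigma>] q \<kappa> True by simp
    finally have "1 *\<^sub>R \<Phi>\<kappa> + (1 - 1) *\<^sub>R \<sigma> \<in> F" by simp
    from log_robustness_le[OF \<sigma> _ _ this] have "Ds_F F \<Phi>\<kappa> \<le> ereal (- log 2 1)"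
      by (simp add: Ds_F_eq_log_robustness)
    then show ?thesis by (simp add: zero_ereal_def max.coboundedI2)
  next
    case False
    with q have "0 < \<kappa>" by linarith
    have "Ds_F F \<Phi>\<kappa> \<le> ereal (log 2 \<kappa> - log 2 q)"
      unfolding Ds_F_eq_log_robustness \<Phi>\<kappa>_def using \<omega> q False
      by (intro log_robustness_convex_comb_le[OF \<sigma>]) (simp_all add: q_def)
    also have "\<dots> = ereal r + elog2 \<kappa>" using \<open>0 < \<kappa>\<close> by (simp add: q_def elog2_pos)
    finally show ?thesis by (simp add: max.coboundedI1)
  qed
  have "Dmax_F F \<Phi>\<kappa> \<le> Ds_F F \<Phi>\<kappa>" by (rule Dmax_F_le_Ds_F)
  then have "Dmax_F F \<Phi>\<kappa> = max (ereal r + elog2 \<kappa>) 0" "Ds_F F \<Phi>\<kappa> = max (ereal r + elog2 \<kappa>) 0"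
    using lower upper by (metis antisym order_trans)+
  then show "Dmax_F F (\<kappa> *\<^sub>R \<Phi> + (1 - \<kappa>) *\<^sub>R \<sigma>) = max (ereal r + elog2 \<kappa>) 0"
    "Ds_F F (\<kappa> *\<^sub>R \<Phi> + (1 - \<kappa>) *\<^sub>R \<sigma>) = max (ereal r + elog2 \<kappa>) 0"
    by (simp_all add: \<Phi>\<kappa>_def)
qed

lemma zero_error_test_profile:
  assumes \<sigma>: "density \<sigma>" and t: "0 < t" "t < 1"
    and \<omega>_free: "(1 - t) *\<^sub>R \<Phi> + t *\<^sub>R \<sigma> \<in> F"
    and Daff: "ereal (- log 2 (1 - t)) \<le> Dmin_aff F \<Phi>" and \<sigma>': "\<sigma>' \<in> affine hull F"
  defines "\<omega> \<equiv> (1 - t) *\<^sub>R \<Phi> + t *\<^sub>R \<sigma>"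
  shows "(1 - t, 0) \<in> (\<lambda>P. (Re (trace (P ** \<omega>)), Re (trace (P ** (\<omega> - \<sigma>'))))) ` zero_error_tests \<Phi>"
    (is "_ \<in> ?K")
proof (rule ccontr)
  assume "(1 - t, 0) \<notin> ?K"
  then obtain a b where ab: "inner a (1 - t, 0::real) < b" "\<forall>x\<in>?K. b < inner a x"
    using separating_hyperplane_closed_point[OF compact_convex_trace_pair_image(2)
        compact_imp_closed[OF compact_convex_trace_pair_image(1)]] by blast
  have "fst a * (1 - t) < b" using ab(1) by (cases a) simp
  then obtain \<beta> \<mu> where \<beta>: "1 - t < \<beta>"
    and bound: "\<And>x y. 1 - t \<le> x \<Longrightarrow> b < fst a * x + snd a * y \<Longrightarrow> \<beta> \<le> x + \<mu> * y"
    by (rule halfplane_shift_bound[where e = "snd a"]) blast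
  define \<theta> where "\<theta> = (1 + \<mu>) *\<^sub>R \<omega> + (- \<mu>) *\<^sub>R \<sigma>'"
  have "\<omega> \<in> affine hull F" using \<omega>_free hull_subset by (fastforce simp: \<omega>_def)
  then have \<theta>: "\<theta> \<in> affine hull F"
    unfolding \<theta>_def using \<sigma>'
    by (rule affine_affine_hull[of F, unfolded affine_def[of "affine hull F"], rule_format]) simp
  have "\<beta> \<le> Re (trace (P ** \<theta>))" if P: "P \<in> zero_error_tests \<Phi>" for P
  proof -
    have "0 \<le> Re (trace (P ** \<sigma>))"
      using P \<sigma> trace_mult_psd_nonneg by (auto simp: zero_error_tests_def density_def)
    then have "1 - t \<le> Re (trace (P ** \<omega>))"
      using P t by (simp add: zero_error_tests_def \<omega>_def matrix_add_ldistrib matrix_mult_scaleR_right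
          trace_add trace_scaleR)
    moreover have "b < fst a * Re (trace (P ** \<omega>)) + snd a * Re (trace (P ** (\<omega> - \<sigma>')))"
      using ab(2) P by (cases a) auto
    ultimately have "\<beta> \<le> Re (trace (P ** \<omega>)) + \<mu> * Re (trace (P ** (\<omega> - \<sigma>')))" by (rule bound)
    then show ?thesis
      by (simp add: \<theta>_def matrix_add_ldistrib matrix_mult_diff_right matrix_mult_scaleR_right
          trace_add trace_sub trace_scaleR algebra_simps)
  qed
  then have "DH0 \<Phi> \<theta> \<le> - elog2 \<beta>"
    unfolding DH0_eq_SUP_zero_error_tests by (intro SUP_least) (simp add: elog2_mono)
  also have "\<dots> < ereal (- log 2 (1 - t))" using \<beta> t by (simp add: elog2_pos)
  also have "\<dots> \<le> DH0 \<Phi> \<theta>" using Daff \<theta> unfolding Dmin_aff_def by (meson INF_lower order_trans)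
  finally show False by simp
qed

lemma Dmin_aff_admixture_ge:
  assumes \<sigma>: "density \<sigma>" and t: "0 < t" "t < 1"
    and \<omega>: "(1 - t) *\<^sub>R \<Phi> + t *\<^sub>R \<sigma> \<in> F"
    and Daff: "ereal (- log 2 (1 - t)) \<le> Dmin_aff F \<Phi>"
  shows "ereal (- log 2 t) \<le> Dmin_aff F \<sigma>"
  unfolding Dmin_aff_def
proof (rule INF_greatest)
  fix \<sigma>' assume \<sigma>': "\<sigma>' \<in> affine hull F"
  define \<omega> where "\<omega> = (1 - t) *\<^sub>R \<Phi> + t *\<^sub>R \<sigma>"
  obtain P where P: "P \<in> zero_error_tests \<Phi>" and P\<omega>: "Re (trace (P ** \<omega>)) = 1 - t"
    and P\<sigma>': "Re (trace (P ** (\<omega> - \<sigma>'))) = 0"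
    using zero_error_test_profile[OF assms \<sigma>'] by (auto simp: \<omega>_def)
  \<comment> \<open>P rejects \<sigma> with certainty, so its complement is a zero-error test for \<sigma>.\<close>
  have "Re (trace (P ** \<sigma>)) = 0"
    using P P\<omega> t by (simp add: zero_error_tests_def \<omega>_def matrix_add_ldistrib
        matrix_mult_scaleR_right trace_add trace_scaleR)
  moreover have "Im (trace (P ** \<sigma>)) = 0"
    using P \<sigma> trace_hermitian_mult_real by (auto simp: zero_error_tests_def density_def psd_def)
  ultimately have "trace (P ** \<sigma>) = 0" by (simp add: complex_eq_iff)
  then have "mat 1 - P \<in> zero_error_tests \<sigma>"
    using P \<sigma> by (simp add: zero_error_tests_def density_def matrix_mult_diff_left trace_sub)
  then have "- elog2 (Re (trace ((mat 1 - P) ** \<sigma>'))) \<le> DH0 \<sigma> \<sigma>'"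
    unfolding DH0_eq_SUP_zero_error_tests by (rule SUP_upper)
  moreover have "Re (trace ((mat 1 - P) ** \<sigma>')) = t"
    using P\<omega> P\<sigma>' trace_affine_hull_free[OF \<sigma>']
    by (simp add: matrix_mult_diff_left matrix_mult_diff_right trace_sub)
  ultimately show "ereal (- log 2 t) \<le> DH0 \<sigma> \<sigma>'" using t by (simp add: elog2_pos)
qed

lemma Dmin_of_admixed_state:
  assumes \<Phi>: "density \<Phi>" and \<sigma>: "density \<sigma>" and t: "0 < t" "t < 1"
    and \<omega>: "(1 - t) *\<^sub>R \<Phi> + t *\<^sub>R \<sigma> \<in> F"
    and Daff: "ereal (- log 2 (1 - t)) \<le> Dmin_aff F \<Phi>"
  shows "Dmin_aff F \<sigma> = ereal (- log 2 t)" and "Dmin_F F \<sigma> = ereal (- log 2 t)"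
proof -
  have "t *\<^sub>R \<sigma> + (1 - t) *\<^sub>R \<Phi> \<in> F" using \<omega> by (simp add: add.commute)
  then have "Dmax_F F \<sigma> \<le> ereal (- log 2 t)"
    unfolding Dmax_F_eq_log_robustness using \<Phi> t by (intro log_robustness_le) auto
  then have "Dmin_F F \<sigma> \<le> ereal (- log 2 t)" by (rule order_trans[OF Dmin_F_le_Dmax_F[OF \<sigma>]])
  moreover have "ereal (- log 2 t) \<le> Dmin_aff F \<sigma>" by (rule Dmin_aff_admixture_ge[OF \<sigma> t \<omega> Daff])
  moreover have "Dmin_aff F \<sigma> \<le> Dmin_F F \<sigma>" by (rule Dmin_aff_le_Dmin_F[OF \<sigma>])
  ultimately show "Dmin_aff F \<sigma> = ereal (- log 2 t)" "Dmin_F F \<sigma> = ereal (- log 2 t)" by auto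
qed

lemma Dmin_F_convex_comb_eq_0:
  assumes \<Phi>: "density \<Phi>" and \<sigma>: "density \<sigma>" and \<kappa>: "0 < \<kappa>" "\<kappa> < 1"
    and \<omega>: "a *\<^sub>R \<Phi> + b *\<^sub>R \<sigma> \<in> F"
  shows "Dmin_F F (\<kappa> *\<^sub>R \<Phi> + (1 - \<kappa>) *\<^sub>R \<sigma>) = 0"
proof (rule Dmin_F_eq_0I[OF \<omega>])
  have psd: "psd \<Phi>" "psd \<sigma>" using \<Phi> \<sigma> by (simp_all add: density_def)
  then show "psd (\<kappa> *\<^sub>R \<Phi> + (1 - \<kappa>) *\<^sub>R \<sigma>)" using \<kappa> by (simp add: psd_add psd_scaleR)
  have "supp_proj (\<kappa> *\<^sub>R \<Phi> + (1 - \<kappa>) *\<^sub>R \<sigma>) ** \<Phi> = \<Phi>"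
    using supp_proj_mult_summand[OF psd] \<kappa> by simp
  moreover have "supp_proj (\<kappa> *\<^sub>R \<Phi> + (1 - \<kappa>) *\<^sub>R \<sigma>) ** \<sigma> = \<sigma>"
    using supp_proj_mult_summand[OF psd(2,1), of "1 - \<kappa>" \<kappa>] \<kappa> by (simp add: add.commute)
  ultimately show "supp_proj (\<kappa> *\<^sub>R \<Phi> + (1 - \<kappa>) *\<^sub>R \<sigma>) ** (a *\<^sub>R \<Phi> + b *\<^sub>R \<sigma>) = a *\<^sub>R \<Phi> + b *\<^sub>R \<sigma>"
    by (simp add: matrix_add_ldistrib matrix_mult_scaleR_right)
qed

lemma Dmin_affine_interpolation:
  assumes \<Phi>: "density \<Phi>" and \<sigma>: "density \<sigma>" and r: "0 < r"
    and Daff: "Dmin_aff F \<Phi> = ereal r" and Dmax: "Dmax_F F \<Phi> = ereal r"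
    and \<omega>: "2 powr (-r) *\<^sub>R \<Phi> + (1 - 2 powr (-r)) *\<^sub>R \<sigma> \<in> F" and \<kappa>: "0 \<le> \<kappa>" "\<kappa> \<le> 1"
  shows "Dmin_aff F (\<kappa> *\<^sub>R \<Phi> + (1 - \<kappa>) *\<^sub>R \<sigma>) = Dmin_F F (\<kappa> *\<^sub>R \<Phi> + (1 - \<kappa>) *\<^sub>R \<sigma>)"
    and "Dmin_F F (\<kappa> *\<^sub>R \<Phi> + (1 - \<kappa>) *\<^sub>R \<sigma>) =
      (if \<kappa> = 0 then - elog2 (1 - 2 powr (-r)) else if \<kappa> = 1 then ereal r else 0)"
proof -
  define t where "t = 1 - 2 powr (-r)"
  have t: "0 < t" "t < 1" using r powr_less_mono[of "-r" 0 "2::real"] by (simp_all add: t_def)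
  have \<omega>': "(1 - t) *\<^sub>R \<Phi> + t *\<^sub>R \<sigma> \<in> F" using \<omega> by (simp add: t_def)
  have "ereal (- log 2 (1 - t)) \<le> Dmin_aff F \<Phi>" using Daff by (simp add: t_def)
  note Dmin_\<sigma> = Dmin_of_admixed_state[OF \<Phi> \<sigma> t \<omega>' this]
  have Dmin_\<Phi>: "Dmin_F F \<Phi> = ereal r"
    using Dmin_aff_le_Dmin_F[OF \<Phi>] Dmin_F_le_Dmax_F[OF \<Phi>] Daff Dmax by (metis antisym)
  define \<Phi>\<kappa> where "\<Phi>\<kappa> = \<kappa> *\<^sub>R \<Phi> + (1 - \<kappa>) *\<^sub>R \<sigma>"
  consider (zero) "\<kappa> = 0" | (one) "\<kappa> = 1" | (proper) "0 < \<kappa>" "\<kappa> < 1" using \<kappa> by fastforce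
  then have "Dmin_aff F \<Phi>\<kappa> = Dmin_F F \<Phi>\<kappa> \<and>
      Dmin_F F \<Phi>\<kappa> = (if \<kappa> = 0 then ereal (- log 2 t) else if \<kappa> = 1 then ereal r else 0)"
  proof cases
    case zero
    then show ?thesis using Dmin_\<sigma> by (simp add: \<Phi>\<kappa>_def)
  next
    case one
    then show ?thesis using Dmin_\<Phi> Daff by (simp add: \<Phi>\<kappa>_def)
  next
    case proper
    have "density \<Phi>\<kappa>" using \<Phi> \<sigma> \<kappa> unfolding \<Phi>\<kappa>_def by (rule density_convex_comb)
    then have "0 \<le> Dmin_aff F \<Phi>\<kappa>" and "Dmin_aff F \<Phi>\<kappa> \<le> Dmin_F F \<Phi>\<kappa>"
      by (simp_all add: Dmin_aff_nonneg Dmin_aff_le_Dmin_F)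
    moreover have "Dmin_F F \<Phi>\<kappa> = 0"
      unfolding \<Phi>\<kappa>_def by (rule Dmin_F_convex_comb_eq_0[OF \<Phi> \<sigma> proper \<omega>'])
    ultimately show ?thesis using proper by auto
  qed
  moreover have "- elog2 (1 - 2 powr (-r)) = ereal (- log 2 t)" using t by (simp add: t_def elog2_pos)
  ultimately show "Dmin_aff F (\<kappa> *\<^sub>R \<Phi> + (1 - \<kappa>) *\<^sub>R \<sigma>) = Dmin_F F (\<kappa> *\<^sub>R \<Phi> + (1 - \<kappa>) *\<^sub>R \<sigma>)"
    and "Dmin_F F (\<kappa> *\<^sub>R \<Phi> + (1 - \<kappa>) *\<^sub>R \<sigma>) =
      (if \<kappa> = 0 then - elog2 (1 - 2 powr (-r)) else if \<kappa> = 1 then ereal r else 0)"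
    by (simp_all add: \<Phi>\<kappa>_def)
qed

lemma Dmax_affine_interpolation:
  assumes \<Phi>: "density \<Phi>" and \<sigma>: "density \<sigma>" and r: "0 < r"
    and Daff: "Dmin_aff F \<Phi> = ereal r" and Dmax: "Dmax_F F \<Phi> = ereal r"
    and \<omega>: "2 powr (-r) *\<^sub>R \<Phi> + (1 - 2 powr (-r)) *\<^sub>R \<sigma> \<in> F" and \<kappa>: "0 \<le> \<kappa>" "\<kappa> \<le> 1"
  shows "Dmax_F F (\<kappa> *\<^sub>R \<Phi> + (1 - \<kappa>) *\<^sub>R \<sigma>) =
    max (ereal r + elog2 \<kappa>) (elog2 ((1 - \<kappa>) / (1 - 2 powr (-r))))"
proof -
  define q where "q = 2 powr (-r)"
  define t where "t = 1 - q"
  define \<Phi>\<kappa> where "\<Phi>\<kappa> = \<kappa> *\<^sub>R \<Phi> + (1 - \<kappa>) *\<^sub>R \<sigma>"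
  have q: "0 < q" "q < 1" using r powr_less_mono[of "-r" 0 "2::real"] by (simp_all add: q_def)
  then have t: "0 < t" "t < 1" by (simp_all add: t_def)
  have \<omega>': "t *\<^sub>R \<sigma> + (1 - t) *\<^sub>R \<Phi> \<in> F" using \<omega> by (simp add: t_def q_def add.commute)
  have Daff': "ereal (- log 2 (1 - t)) \<le> Dmin_aff F \<Phi>" using Daff by (simp add: t_def q_def)
  have \<Phi>\<kappa>_swap: "\<Phi>\<kappa> = (1 - \<kappa>) *\<^sub>R \<sigma> + (1 - (1 - \<kappa>)) *\<^sub>R \<Phi>" by (simp add: \<Phi>\<kappa>_def add.commute)
  have "ereal r + elog2 \<kappa> \<le> Dmax_F F \<Phi>\<kappa>"
    unfolding \<Phi>\<kappa>_def using Dmax by (intro Dmax_F_convex_comb_ge[OF \<sigma> _ \<kappa>]) simp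
  moreover have "elog2 ((1 - \<kappa>) / t) \<le> Dmax_F F \<Phi>\<kappa>"
  proof -
    have "ereal (- log 2 t) \<le> Dmax_F F \<sigma>"
      using Dmin_of_admixed_state(2)[OF \<Phi> \<sigma> t _ Daff'] \<omega>' Dmin_F_le_Dmax_F[where F = F, OF \<sigma>]
      by (simp add: add.commute)
    then have "ereal (- log 2 t) + elog2 (1 - \<kappa>) \<le> Dmax_F F \<Phi>\<kappa>"
      unfolding \<Phi>\<kappa>_swap by (rule Dmax_F_convex_comb_ge[OF \<Phi>]) (use \<kappa> in simp_all)
    then show ?thesis using t by (simp add: elog2_divide)
  qed
  moreover have "Dmax_F F \<Phi>\<kappa> \<le> max (ereal r + elog2 \<kappa>) (elog2 ((1 - \<kappa>) / t))"
  proof (cases "q \<le> \<kappa>")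
    case True
    with q have "0 < \<kappa>" by linarith
    have "Dmax_F F \<Phi>\<kappa> \<le> ereal (log 2 \<kappa> - log 2 q)"
      unfolding Dmax_F_eq_log_robustness \<Phi>\<kappa>_def using \<omega> \<sigma> q True
      by (intro log_robustness_convex_comb_le) (simp_all add: q_def)
    also have "\<dots> = ereal r + elog2 \<kappa>" using \<open>0 < \<kappa>\<close> by (simp add: q_def elog2_pos)
    finally show ?thesis by (simp add: max.coboundedI1)
  next
    case False
    then have "Dmax_F F \<Phi>\<kappa> \<le> ereal (log 2 (1 - \<kappa>) - log 2 t)"
      unfolding Dmax_F_eq_log_robustness \<Phi>\<kappa>_swap using \<omega>' \<Phi> t
      by (intro log_robustness_convex_comb_le) (simp_all add: t_def)
    also have "\<dots> = elog2 ((1 - \<kappa>) / t)" using t False q by (simp add: elog2_pos log_divide)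
    finally show ?thesis by (simp add: max.coboundedI2)
  qed
  ultimately show ?thesis by (simp add: \<Phi>\<kappa>_def t_def q_def antisym)
qed

end

theorem proposition2:
  fixes F :: "(complex^'n::finite^'n) set" and \<Phi> :: "complex^'n^'n"
  assumes F_states: "\<forall>\<sigma>\<in>F. density \<sigma>"
    and F_convex: "convex F" and F_closed: "closed F"
    and \<Phi>_state: "density \<Phi>"
  shows
   "(\<forall>(r::real) \<sigma>.
       Dmin_F F \<Phi> = ereal r \<and> Ds_F F \<Phi> = ereal r \<and> \<sigma> \<in> F \<and>
       (2 powr (-r)) *\<^sub>R \<Phi> + (1 - 2 powr (-r)) *\<^sub>R \<sigma> \<in> F \<longrightarrow>
       (\<forall>\<kappa>\<in>{0..1::real}.
          Dmin_F F (\<kappa> *\<^sub>R \<Phi> + (1 - \<kappa>) *\<^sub>R \<sigma>) = (if \<kappa> < 1 then 0 else ereal r) \<and>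
          Dmax_F F (\<kappa> *\<^sub>R \<Phi> + (1 - \<kappa>) *\<^sub>R \<sigma>) = max (ereal r + elog2 \<kappa>) 0 \<and>
          Ds_F F (\<kappa> *\<^sub>R \<Phi> + (1 - \<kappa>) *\<^sub>R \<sigma>) = max (ereal r + elog2 \<kappa>) 0))
    \<and>
    (\<forall>(r::real) \<sigma>.
       Dmin_aff F \<Phi> = ereal r \<and> Dmax_F F \<Phi> = ereal r \<and> 0 < r \<and> density \<sigma> \<and>
       (2 powr (-r)) *\<^sub>R \<Phi> + (1 - 2 powr (-r)) *\<^sub>R \<sigma> \<in> F \<longrightarrow>
       (\<forall>\<kappa>\<in>{0..1::real}.
          Dmin_aff F (\<kappa> *\<^sub>R \<Phi> + (1 - \<kappa>) *\<^sub>R \<sigma>) = Dmin_F F (\<kappa> *\<^sub>R \<Phi> + (1 - \<kappa>) *\<^sub>R \<sigma>) \<and>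
          Dmin_F F (\<kappa> *\<^sub>R \<Phi> + (1 - \<kappa>) *\<^sub>R \<sigma>) =
            (if \<kappa> = 0 then - elog2 (1 - 2 powr (-r)) else if \<kappa> = 1 then ereal r else 0) \<and>
          Dmax_F F (\<kappa> *\<^sub>R \<Phi> + (1 - \<kappa>) *\<^sub>R \<sigma>) =
            max (ereal r + elog2 \<kappa>) (elog2 ((1 - \<kappa>) / (1 - 2 powr (-r))))))"
proof -
  interpret free_states F using F_states by unfold_locales blast
  \<comment> \<open>Closedness of F only guarantees that some \<sigma> attains the robustness; here \<sigma> is given.\<close>
  show ?thesis
    apply (rule conjI; intro allI impI ballI; elim conjE)
    subgoal for r \<sigma> \<kappa>
      using Dmin_F_free_interpolation[where \<sigma> = \<sigma> and \<Phi> = \<Phi> and r = r and \<kappa> = \<kappa>]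
        Dmax_Ds_free_interpolation[OF F_convex \<Phi>_state, where r = r and \<sigma> = \<sigma> and \<kappa> = \<kappa>]
        \<Phi>_state by auto
    subgoal for r \<sigma> \<kappa>
      using Dmin_affine_interpolation[OF \<Phi>_state, where \<sigma> = \<sigma> and r = r and \<kappa> = \<kappa>]
        Dmax_affine_interpolation[OF \<Phi>_state, where \<sigma> = \<sigma> and r = r and \<kappa> = \<kappa>]
      by auto
    done
qed

end
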